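(* Let $U \subset \mathbb{R}^n$ be a relatively compact open subanalytic set and $X = \overline{U} \setminus U$. Let $\pi: \mathbb{R}^n \to \mathbb{R}^{n-1}$ be the standard projection $\pi(x', x_n) = x'$, with $\pi|_X$ finite, and let $\Delta_\pi$ be its discriminant set. Fix $C, \varepsilon > 0$, let $x_0 \in U$, and suppose $\pi$ is $(C, \varepsilon)$-regular at $x_0$ with respect to $X$. Write $x_0' = \pi(x_0)$ and $\mathscr{C} = \{x_0 + \lambda(\eta, 1) : \eta \in \mathbb{R}^{n-1}, |\eta| < \varepsilon,\ \lambda \in \mathbb{R} \setminus \{0\}\}$. Let $\tilde C \ge 1$ be a constant such that $$\operatorname{dist}(x_0, X \setminus \mathscr{C}) \le \tilde C \operatorname{dist}(x_0', \pi(X \setminus \mathscr{C})) \le \tilde C \operatorname{dist}(x_0', \Delta_\pi).$$ Let $U'$ be an open subanalytic subset of $\pi(U) \setminus \Delta_\pi$ such that $x_0' \in U'$ and $$\operatorname{dist}(x_0', \Delta_\pi) \le \tilde C \operatorname{dist}(x_0', \partial U').$$ Let $U_1$ be the member of the cylindrical decomposition of $U \cap \pi^{-1}(U')$ containing $x_0$. Then $$\operatorname{dist}(x_0, X) \le \tilde C^2 \operatorname{dist}(x_0, \partial U_1).$$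
   Context: For an open set $W$, $\partial W = \overline{W} \setminus W$. Let $\operatorname{Reg}(X)$ be the set of points of $X$ where $X$ is locally a real analytic submanifold of dimension $n-1$, and $Z = X \setminus \operatorname{Reg}(X)$; the discriminant set $\Delta_\pi$ is the union of $\pi(Z)$ and the critical values of $\pi|_{\operatorname{Reg}(X)}$. The projection $\pi$ is $(C,\varepsilon)$-regular at $x_0$ with respect to $X$ if: (a) $\pi|_X$ is finite; (b) $X \cap \mathscr{C}$ is empty or a finite disjoint union of sets $\{x_0 + \lambda_i(\eta)(\eta, 1) : |\eta| < \varepsilon\}$ with $\lambda_i$ real analytic nowhere vanishing functions on $\{|\eta| < \varepsilon\}$; (c) $\|\operatorname{grad} \lambda_i(\eta)\| \le C|\lambda_i(\eta)|$ for all $|\eta| < \varepsilon$. Cylindrical decomposition: if $U'_0$ is the connected component of $U'$ containing $x_0'$, then $X \cap \pi^{-1}(U'_0)$ is the union of the graphs of finitely many bounded real analytic functions $\varphi_1 < \dots < \varphi_k$ on $U'_0$, and the member containing $x_0$ is the set $U_1 = \{(x', x_n) : x' \in U'_0,\ \varphi_i(x') < x_n < \varphi_{i+1}(x')\}$ that contains $x_0$. *)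

theory Defs
  imports "HOL-Analysis.Analysis"
begin

definition mindex :: "('a::euclidean_space \<Rightarrow> nat) set" where
  "mindex = {\<alpha>. \<forall>b. b \<notin> Basis \<longrightarrow> \<alpha> b = 0}"

definition monom :: "('a::euclidean_space \<Rightarrow> nat) \<Rightarrow> 'a \<Rightarrow> real" where
  "monom \<alpha> h = (\<Prod>b\<in>Basis. (h \<bullet> b) ^ \<alpha> b)"

definition ranalytic_at :: "('a::euclidean_space \<Rightarrow> real) \<Rightarrow> 'a \<Rightarrow> bool" where
  "ranalytic_at f a \<longleftrightarrow>
     (\<exists>r>0. \<exists>c. \<forall>x\<in>ball a r. ((\<lambda>\<alpha>. c \<alpha> * monom \<alpha> (x - a)) has_sum f x) mindex)"

definition ranalytic_on :: "('a::euclidean_space \<Rightarrow> real) \<Rightarrow> 'a set \<Rightarrow> bool" where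
  "ranalytic_on f S \<longleftrightarrow> (\<forall>a\<in>S. ranalytic_at f a)"

section \<open>The space R^n x R^m, with R^m encoded as nat-indexed vectors supported on {..<m}\<close>

definition cs :: "nat \<Rightarrow> (nat \<Rightarrow> real) set" where
  "cs m = {v. \<forall>i\<ge>m. v i = 0}"

definition pspace :: "nat \<Rightarrow> ('a::euclidean_space \<times> (nat \<Rightarrow> real)) set" where
  "pspace m = UNIV \<times> cs m"

definition pnorm :: "nat \<Rightarrow> 'a::euclidean_space \<times> (nat \<Rightarrow> real) \<Rightarrow> real" where
  "pnorm m p = sqrt ((norm (fst p))\<^sup>2 + (\<Sum>i<m. (snd p i)\<^sup>2))"

definition pmindex :: "nat \<Rightarrow> (('a::euclidean_space \<Rightarrow> nat) \<times> (nat \<Rightarrow> nat)) set" where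
  "pmindex m = {(\<alpha>, \<beta>). \<alpha> \<in> mindex \<and> (\<forall>i\<ge>m. \<beta> i = 0)}"

definition pmonom :: "nat \<Rightarrow> ('a::euclidean_space \<Rightarrow> nat) \<times> (nat \<Rightarrow> nat)
    \<Rightarrow> 'a \<times> (nat \<Rightarrow> real) \<Rightarrow> real" where
  "pmonom m ab q = monom (fst ab) (fst q) * (\<Prod>i<m. (snd q i) ^ (snd ab i))"

definition panalytic_at :: "nat \<Rightarrow> ('a::euclidean_space \<times> (nat \<Rightarrow> real) \<Rightarrow> real)
    \<Rightarrow> 'a \<times> (nat \<Rightarrow> real) \<Rightarrow> bool" where
  "panalytic_at m g p \<longleftrightarrow>
     (\<exists>r>0. \<exists>c. \<forall>q\<in>pspace m. pnorm m (q - p) < r \<longrightarrow>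
        ((\<lambda>ab. c ab * pmonom m ab (q - p)) has_sum g q) (pmindex m))"

definition popen :: "nat \<Rightarrow> ('a::euclidean_space \<times> (nat \<Rightarrow> real)) set \<Rightarrow> bool" where
  "popen m W \<longleftrightarrow> W \<subseteq> pspace m \<and>
     (\<forall>p\<in>W. \<exists>r>0. \<forall>q\<in>pspace m. pnorm m (q - p) < r \<longrightarrow> q \<in> W)"

definition pbounded :: "nat \<Rightarrow> ('a::euclidean_space \<times> (nat \<Rightarrow> real)) set \<Rightarrow> bool" where
  "pbounded m B \<longleftrightarrow> (\<exists>R. \<forall>q\<in>B. pnorm m q \<le> R)"

definition psemianalytic :: "nat \<Rightarrow> ('a::euclidean_space \<times> (nat \<Rightarrow> real)) set \<Rightarrow> bool" where
  "psemianalytic m B \<longleftrightarrow> B \<subseteq> pspace m \<and>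
     (\<forall>p\<in>pspace m. \<exists>W. popen m W \<and> p \<in> W \<and>
        (\<exists>(I::nat) (J::nat) F G.
           (\<forall>i<I. \<forall>j<J. \<forall>q\<in>W. panalytic_at m (F i j) q \<and> panalytic_at m (G i j) q) \<and>
           B \<inter> W = W \<inter> (\<Union>i<I. \<Inter>j<J. {q\<in>W. F i j q = 0 \<and> G i j q > 0})))"

text \<open>Subanalytic subsets of R^n: locally the projection of a relatively compact
  (= bounded) semianalytic subset of R^n x R^m, for some m.\<close>
definition subanalytic :: "'a::euclidean_space set \<Rightarrow> bool" where
  "subanalytic A \<longleftrightarrow>
     (\<forall>x. \<exists>V. open V \<and> x \<in> V \<and>
        (\<exists>m B. psemianalytic m B \<and> pbounded m B \<and> A \<inter> V = fst ` B))"

text \<open>Local analytic defining function of X as a hypersurface (submanifold of codim 1).\<close>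
definition ldf :: "'a set \<Rightarrow> 'a set \<Rightarrow> ('a::euclidean_space \<Rightarrow> real) \<Rightarrow> bool" where
  "ldf X V f \<longleftrightarrow> open V \<and> ranalytic_on f V \<and> X \<inter> V = {q\<in>V. f q = 0} \<and>
     (\<forall>q\<in>X \<inter> V. \<exists>D. (f has_derivative D) (at q) \<and> D \<noteq> (\<lambda>h. 0))"

definition Reg :: "'a::euclidean_space set \<Rightarrow> 'a set" where
  "Reg X = {p\<in>X. \<exists>V f. p \<in> V \<and> ldf X V f}"

text \<open>Critical points of the projection restricted to Reg X: the differential
  T_p X = ker Df(p) \<rightarrow> R^(n-1) of fst is not surjective.\<close>
definition crit_pt :: "('b::euclidean_space \<times> real) set \<Rightarrow> 'b \<times> real \<Rightarrow> bool" where
  "crit_pt X p \<longleftrightarrow> p \<in> Reg X \<and>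
     (\<exists>V f D. p \<in> V \<and> ldf X V f \<and> (f has_derivative D) (at p) \<and>
        fst ` {v. D v = 0} \<noteq> UNIV)"

definition discr :: "('b::euclidean_space \<times> real) set \<Rightarrow> 'b set" where
  "discr X = fst ` (X - Reg X) \<union> fst ` {p. crit_pt X p}"

definition finite_proj :: "('b \<times> real) set \<Rightarrow> bool" where
  "finite_proj X \<longleftrightarrow> (\<forall>y. finite {x\<in>X. fst x = y})"

definition cone_at :: "('b::real_normed_vector \<times> real) \<Rightarrow> real \<Rightarrow> ('b \<times> real) set" where
  "cone_at x0 \<epsilon> = {x0 + l *\<^sub>R (\<eta>, 1) | \<eta> l. norm \<eta> < \<epsilon> \<and> l \<noteq> 0}"

definition ce_regular :: "real \<Rightarrow> real \<Rightarrow> ('b::euclidean_space \<times> real) \<Rightarrow> ('b \<times> real) set \<Rightarrow> bool" where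
  "ce_regular C \<epsilon> x0 X \<longleftrightarrow> finite_proj X \<and>
     (\<exists>(k::nat) (lam :: nat \<Rightarrow> 'b \<Rightarrow> real).
        (\<forall>i<k. ranalytic_on (lam i) (ball 0 \<epsilon>) \<and> (\<forall>\<eta>\<in>ball 0 \<epsilon>. lam i \<eta> \<noteq> 0) \<and>
            (\<forall>\<eta>\<in>ball 0 \<epsilon>. \<exists>g. (lam i has_derivative (\<lambda>h. g \<bullet> h)) (at \<eta>) \<and>
                                norm g \<le> C * \<bar>lam i \<eta>\<bar>)) \<and>
        (\<forall>i<k. \<forall>j<k. i \<noteq> j \<longrightarrow>
            {x0 + lam i \<eta> *\<^sub>R (\<eta>, 1) | \<eta>. norm \<eta> < \<epsilon>} \<inter>
            {x0 + lam j \<eta> *\<^sub>R (\<eta>, 1) | \<eta>. norm \<eta> < \<epsilon>} = {}) \<and>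
        X \<inter> cone_at x0 \<epsilon> = (\<Union>i<k. {x0 + lam i \<eta> *\<^sub>R (\<eta>, 1) | \<eta>. norm \<eta> < \<epsilon>}))"

end

theory Submission
  imports Defs
begin

text \<open>A point of the frontier of U1 either lies over the frontier of the base U0', hence over
  the frontier of U', or, the bounding functions being analytic and so continuous, on one of
  their graphs, hence in X. In the first case the hypotheses chain to
  dist(x0, X) \<le> dist(x0, X - cone) \<le> Ct^2 dist(x0', frontier U'), and projecting does not increase
  distances. The first step needs X - cone to be nonempty, which holds because a horizontal ray
  from x0 leaves the bounded set U without meeting the cone.\<close>

lemma monom_eq_0:
  assumes "\<alpha> \<in> mindex" "\<alpha> \<noteq> (\<lambda>_. 0)"
  shows "monom \<alpha> (0::'a::euclidean_space) = 0"
proof -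
  obtain b where "\<alpha> b \<noteq> 0" using assms(2) by auto
  moreover from this have "b \<in> Basis" using assms(1) unfolding mindex_def by auto
  ultimately show ?thesis unfolding monom_def by (auto intro!: prod_zero)
qed

lemma abs_monom_le:
  fixes h h0 :: "'a::euclidean_space"
  assumes \<alpha>: "\<alpha> \<in> mindex" "\<alpha> \<noteq> (\<lambda>_. 0)"
    and \<delta>: "0 \<le> \<delta>" "\<delta> \<le> 1" and \<rho>: "0 \<le> \<rho>"
    and h: "\<And>b. b \<in> Basis \<Longrightarrow> \<bar>h \<bullet> b\<bar> \<le> \<delta> * \<rho>"
    and h0: "\<And>b. b \<in> Basis \<Longrightarrow> h0 \<bullet> b = \<rho>"
  shows "\<bar>monom \<alpha> h\<bar> \<le> \<delta> * monom \<alpha> h0"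
proof -
  obtain b0 where b0: "\<alpha> b0 \<noteq> 0" using \<alpha>(2) by auto
  have b0B: "b0 \<in> Basis" using \<alpha>(1) b0 unfolding mindex_def by auto
  have "(\<Prod>b\<in>Basis. \<delta> ^ \<alpha> b) = \<delta> ^ \<alpha> b0 * (\<Prod>b\<in>Basis - {b0}. \<delta> ^ \<alpha> b)"
    using b0B by (simp add: prod.remove)
  also have "\<dots> \<le> \<delta> ^ \<alpha> b0"
    using \<delta> by (intro mult_left_le prod_le_1) (auto simp: power_le_one)
  also have "\<dots> \<le> \<delta>"
    using b0 \<delta> by (metis One_nat_def Suc_leI not_gr_zero power_decreasing power_one_right)
  finally have prod_\<delta>: "(\<Prod>b\<in>Basis. \<delta> ^ \<alpha> b) \<le> \<delta>" .
  have "\<bar>monom \<alpha> h\<bar> = (\<Prod>b\<in>Basis. \<bar>h \<bullet> b\<bar> ^ \<alpha> b)"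
    unfolding monom_def by (simp add: abs_prod power_abs)
  also have "\<dots> \<le> (\<Prod>b\<in>Basis. (\<delta> * \<rho>) ^ \<alpha> b)"
    by (rule prod_mono) (auto intro: power_mono h)
  also have "\<dots> = (\<Prod>b\<in>Basis. \<delta> ^ \<alpha> b) * monom \<alpha> h0"
    unfolding monom_def by (simp add: h0 power_mult_distrib prod.distrib)
  also have "\<dots> \<le> \<delta> * monom \<alpha> h0"
    unfolding monom_def using prod_\<delta> \<rho>
    by (intro mult_right_mono prod_nonneg) (simp_all add: h0)
  finally show ?thesis .
qed

text \<open>Absolute convergence at the corner h0 = (\<rho>, ..., \<rho>) of a cube controls every increment
  inside the cube, since all non-constant monomials vanish at 0.\<close>

lemma power_series_increment_le:
  fixes x a h0 :: "'a::euclidean_space"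
  assumes sum_x: "((\<lambda>\<alpha>. c \<alpha> * monom \<alpha> (x - a)) has_sum f x) mindex"
    and sum_a: "((\<lambda>\<alpha>. c \<alpha> * monom \<alpha> 0) has_sum f a) mindex"
    and abs_sum: "((\<lambda>\<alpha>. \<bar>c \<alpha>\<bar> * monom \<alpha> h0) has_sum M) mindex"
    and h0: "\<And>b. b \<in> Basis \<Longrightarrow> h0 \<bullet> b = \<rho>" and \<rho>: "\<rho> > 0"
    and x: "norm (x - a) \<le> \<rho>"
  shows "\<bar>f x - f a\<bar> \<le> M / \<rho> * norm (x - a)"
proof -
  define \<delta> where "\<delta> = norm (x - a) / \<rho>"
  have \<delta>: "0 \<le> \<delta>" "\<delta> \<le> 1" using x \<rho> by (auto simp: \<delta>_def)
  have coord: "\<bar>(x - a) \<bullet> b\<bar> \<le> \<delta> * \<rho>" if "b \<in> Basis" for b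
    using Basis_le_norm[OF that] \<rho> by (simp add: \<delta>_def)
  have monom_h0: "monom \<alpha> h0 \<ge> 0" for \<alpha>
    unfolding monom_def using \<rho> by (auto intro!: prod_nonneg simp: h0)
  have diff: "((\<lambda>\<alpha>. c \<alpha> * monom \<alpha> (x - a) - c \<alpha> * monom \<alpha> 0) has_sum (f x - f a)) mindex"
    using has_sum_add[OF sum_x, of "\<lambda>\<alpha>. - (c \<alpha> * monom \<alpha> 0)" "- f a"] sum_a
    by (simp add: has_sum_uminus)
  have "norm (f x - f a) \<le> \<delta> * M"
  proof (rule norm_infsum_le[OF diff has_sum_cmult_right[OF abs_sum]])
    fix \<alpha> :: "'a \<Rightarrow> nat" assume \<alpha>: "\<alpha> \<in> mindex"
    show "norm (c \<alpha> * monom \<alpha> (x - a) - c \<alpha> * monom \<alpha> 0) \<le> \<delta> * (\<bar>c \<alpha>\<bar> * monom \<alpha> h0)"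
    proof (cases "\<alpha> = (\<lambda>_. 0)")
      case True
      then show ?thesis using \<delta> monom_h0 by (simp add: monom_def)
    next
      case False
      have "\<bar>monom \<alpha> (x - a)\<bar> \<le> \<delta> * monom \<alpha> h0"
        using abs_monom_le[OF \<alpha> False \<delta> less_imp_le[OF \<rho>] coord h0] .
      then show ?thesis
        using monom_eq_0[OF \<alpha> False]
        by (simp add: abs_mult) (metis abs_ge_zero mult.left_commute mult_left_mono)
    qed
  qed
  then show ?thesis using \<rho> by (simp add: \<delta>_def field_simps)
qed

lemma diagonal_vector_exists:
  fixes \<rho> :: real
  assumes "\<rho> \<ge> 0"
  obtains h :: "'a::euclidean_space" where "\<And>b. b \<in> Basis \<Longrightarrow> h \<bullet> b = \<rho>" "norm h \<le> DIM('a) * \<rho>"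
proof
  let ?h = "\<Sum>b\<in>(Basis::'a set). \<rho> *\<^sub>R b"
  show "?h \<bullet> b = \<rho>" if "b \<in> Basis" for b
    using that by (simp add: inner_sum_left inner_Basis if_distrib sum.delta cong: if_cong)
  have "norm ?h \<le> (\<Sum>b\<in>(Basis::'a set). norm (\<rho> *\<^sub>R b))"
    by (rule norm_sum)
  then show "norm ?h \<le> DIM('a) * \<rho>"
    using assms by simp
qed

lemma ranalytic_at_increment_le:
  fixes f :: "'a::euclidean_space \<Rightarrow> real"
  assumes "ranalytic_at f a"
  obtains \<rho> M where "\<rho> > 0" "\<And>x. x \<in> ball a \<rho> \<Longrightarrow> \<bar>f x - f a\<bar> \<le> M * norm (x - a)"
proof -
  obtain r c where r: "r > 0" and sums: "\<And>x. x \<in> ball a r \<Longrightarrow>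
      ((\<lambda>\<alpha>. c \<alpha> * monom \<alpha> (x - a)) has_sum f x) mindex"
    using assms unfolding ranalytic_at_def by blast
  define \<rho> where "\<rho> = r / (DIM('a) + 1)"
  have \<rho>: "\<rho> > 0" "DIM('a) * \<rho> < r"
    using r by (auto simp: \<rho>_def field_simps)
  have "1 * \<rho> \<le> DIM('a) * \<rho>"
    using \<rho>(1) by (intro mult_right_mono) auto
  with \<rho>(2) have "\<rho> < r" by linarith
  obtain h0 :: 'a where h0: "\<And>b. b \<in> Basis \<Longrightarrow> h0 \<bullet> b = \<rho>" "norm h0 \<le> DIM('a) * \<rho>"
    using diagonal_vector_exists[of \<rho>] \<rho>(1) by auto
  then have "a + h0 \<in> ball a r" using \<rho>(2) by (simp add: dist_norm)
  from has_sum_imp_summable[OF sums[OF this]]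
  have "(\<lambda>\<alpha>. c \<alpha> * monom \<alpha> h0) summable_on mindex" by simp
  then have "(\<lambda>\<alpha>. norm (c \<alpha> * monom \<alpha> h0)) summable_on mindex"
    by (rule summable_on_iff_abs_summable_on_real[THEN iffD1])
  moreover have "norm (c \<alpha> * monom \<alpha> h0) = \<bar>c \<alpha>\<bar> * monom \<alpha> h0" for \<alpha>
    unfolding monom_def using \<rho> by (simp add: abs_mult h0 abs_prod)
  ultimately have "(\<lambda>\<alpha>. \<bar>c \<alpha>\<bar> * monom \<alpha> h0) summable_on mindex"
    by simp
  then obtain M where abs_sum: "((\<lambda>\<alpha>. \<bar>c \<alpha>\<bar> * monom \<alpha> h0) has_sum M) mindex"
    unfolding summable_on_def by blast
  have sum_a: "((\<lambda>\<alpha>. c \<alpha> * monom \<alpha> 0) has_sum f a) mindex"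
    using sums[of a] r by simp
  show ?thesis
  proof (rule that[OF \<rho>(1)])
    fix x assume "x \<in> ball a \<rho>"
    then have x: "norm (x - a) \<le> \<rho>"
      by (simp add: dist_norm norm_minus_commute)
    with \<open>\<rho> < r\<close> have "x \<in> ball a r"
      by (simp add: dist_norm norm_minus_commute)
    from power_series_increment_le[OF sums[OF this] sum_a abs_sum h0(1) \<rho>(1) x]
    show "\<bar>f x - f a\<bar> \<le> M / \<rho> * norm (x - a)" .
  qed
qed

lemma ranalytic_at_imp_isCont:
  fixes f :: "'a::euclidean_space \<Rightarrow> real"
  assumes "ranalytic_at f a"
  shows "isCont f a"
proof -
  obtain \<rho> M where \<rho>: "\<rho> > 0"
    and increment_le: "\<And>x. x \<in> ball a \<rho> \<Longrightarrow> \<bar>f x - f a\<bar> \<le> M * norm (x - a)"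
    using ranalytic_at_increment_le[OF assms] by blast
  have "\<forall>\<^sub>F x in at a. x \<in> ball a \<rho>"
    using eventually_at_ball[OF \<rho>, of a UNIV] by simp
  then have "\<forall>\<^sub>F x in at a. norm (f x - f a) \<le> M * norm (x - a)"
    by (rule eventually_mono) (simp add: increment_le)
  moreover have "((\<lambda>x. M * norm (x - a)) \<longlongrightarrow> 0) (at a)"
    by (intro tendsto_mult_right_zero tendsto_norm_zero LIM_zero tendsto_ident_at)
  ultimately have "((\<lambda>x. f x - f a) \<longlongrightarrow> 0) (at a)"
    by (rule Lim_null_comparison)
  then show ?thesis
    unfolding isCont_def by (simp add: LIM_zero_iff)
qed

lemma ranalytic_on_imp_continuous_on:
  "ranalytic_on f S \<Longrightarrow> continuous_on S f"
  by (auto simp: ranalytic_on_def intro!: continuous_at_imp_continuous_on ranalytic_at_imp_isCont)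

lemma isCont_closure_ge:
  fixes h :: "'a::metric_space \<Rightarrow> real"
  assumes "isCont h p" "p \<in> closure S" "\<And>q. q \<in> S \<Longrightarrow> c \<le> h q"
  shows "c \<le> h p"
proof -
  obtain q where "\<And>n. q n \<in> S" "q \<longlonglongrightarrow> p"
    using assms(2) unfolding closure_sequential by blast
  then show ?thesis
    using assms(3) by (intro tendsto_lowerbound[OF isCont_tendsto_compose[OF assms(1)]]) auto
qed

definition cylinder_cell :: "'a set \<Rightarrow> ('a \<Rightarrow> real) \<Rightarrow> ('a \<Rightarrow> real) \<Rightarrow> ('a \<times> real) set" where
  "cylinder_cell V f g = {(y, t). y \<in> V \<and> f y < t \<and> t < g y}"

lemma graph_point_in_frontier_cylinder_cell:
  fixes f g :: "'a::metric_space \<Rightarrow> real"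
  assumes "y \<in> V" "f y < g y"
  shows "(y, f y) \<in> closure (cylinder_cell V f g) - cylinder_cell V f g"
proof -
  have "{y} \<times> {f y<..<g y} \<subseteq> cylinder_cell V f g"
    using assms(1) by (auto simp: cylinder_cell_def)
  then have "closure ({y} \<times> {f y<..<g y}) \<subseteq> closure (cylinder_cell V f g)"
    by (rule closure_mono)
  then show ?thesis
    using assms(2) by (auto simp: closure_Times cylinder_cell_def)
qed

lemma frontier_cylinder_cell_subset:
  fixes f g :: "'a::metric_space \<Rightarrow> real"
  assumes "continuous_on V f" "continuous_on V g" "open V"
  shows "closure (cylinder_cell V f g) - cylinder_cell V f g
    \<subseteq> frontier V \<times> UNIV \<union> (\<lambda>y. (y, f y)) ` V \<union> (\<lambda>y. (y, g y)) ` V"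
proof
  fix p assume p: "p \<in> closure (cylinder_cell V f g) - cylinder_cell V f g"
  obtain y t where p_eq: "p = (y, t)" by fastforce
  have "cylinder_cell V f g \<subseteq> V \<times> UNIV" by (auto simp: cylinder_cell_def)
  from closure_mono[OF this] have "y \<in> closure V"
    using p by (auto simp: closure_Times p_eq)
  moreover have "t = f y \<or> t = g y" if y: "y \<in> V"
  proof -
    have "isCont f (fst (y, t))" "isCont g (fst (y, t))"
      using y assms continuous_on_eq_continuous_at by auto
    then have "isCont (\<lambda>q. f (fst q)) (y, t)" "isCont (\<lambda>q. g (fst q)) (y, t)"
      by (auto intro: isCont_o2[OF isCont_fst[OF continuous_ident]])
    then have lo: "isCont (\<lambda>q. snd q - f (fst q)) (y, t)"
      and hi: "isCont (\<lambda>q. g (fst q) - snd q) (y, t)"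
      by (auto intro!: continuous_intros)
    have cl: "(y, t) \<in> closure (cylinder_cell V f g)" using p by (simp add: p_eq)
    have "0 \<le> (\<lambda>q. snd q - f (fst q)) (y, t)" "0 \<le> (\<lambda>q. g (fst q) - snd q) (y, t)"
      by (rule isCont_closure_ge[OF lo cl] isCont_closure_ge[OF hi cl];
          auto simp: cylinder_cell_def)+
    then show ?thesis
      using p y by (auto simp: p_eq cylinder_cell_def)
  qed
  ultimately show "p \<in> frontier V \<times> UNIV \<union> (\<lambda>y. (y, f y)) ` V \<union> (\<lambda>y. (y, g y)) ` V"
    using assms(3) unfolding p_eq by (auto simp: frontier_def interior_open)
qed

lemma ray_meets_frontier:
  fixes U :: "'a::real_normed_vector set"
  assumes "bounded U" "x \<in> U" "v \<noteq> 0"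
  obtains s where "s \<ge> 0" "x + s *\<^sub>R v \<in> frontier U"
proof -
  define R where "R = (\<lambda>s. x + s *\<^sub>R v) ` {0..}"
  have "connected R"
    unfolding R_def by (intro connected_continuous_image continuous_intros) auto
  have "x \<in> R" unfolding R_def by force
  obtain B where B: "\<And>u. u \<in> U \<Longrightarrow> norm u \<le> B"
    using assms(1) bounded_iff by blast
  define s where "s = (\<bar>B\<bar> + norm x + 1) / norm v"
  have "norm (s *\<^sub>R v) \<le> norm (x + s *\<^sub>R v) + norm x"
    using norm_triangle_ineq4[of "x + s *\<^sub>R v" x] by simp
  moreover have "norm (s *\<^sub>R v) = \<bar>B\<bar> + norm x + 1"
    using assms(3) by (simp add: s_def)
  ultimately have "x + s *\<^sub>R v \<notin> U"
    using B by fastforce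
  moreover have "x + s *\<^sub>R v \<in> R"
    unfolding R_def s_def by (intro imageI) simp
  ultimately have "R \<inter> frontier U \<noteq> {}"
    using connected_Int_frontier[OF \<open>connected R\<close>] \<open>x \<in> R\<close> assms(2) by blast
  then show ?thesis
    using that unfolding R_def by auto
qed

text \<open>A horizontal ray from x0 leaves U without meeting the cone, whose points differ
  from x0 in the last coordinate.\<close>

lemma frontier_minus_cone_nonempty:
  fixes U :: "('a::euclidean_space \<times> real) set"
  assumes "bounded U" "x0 \<in> U"
  shows "frontier U - cone_at x0 \<epsilon> \<noteq> {}"
proof -
  obtain b :: 'a where "b \<in> Basis" using nonempty_Basis by blast
  then have "(b, 0) \<noteq> (0 :: 'a \<times> real)" by (auto simp: zero_prod_def nonzero_Basis)
  then obtain s where "x0 + s *\<^sub>R (b, 0) \<in> frontier U"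
    using ray_meets_frontier[OF assms] by blast
  moreover have "x0 + s *\<^sub>R (b, 0) \<notin> cone_at x0 \<epsilon>"
    by (auto simp: cone_at_def)
  ultimately show ?thesis by blast
qed

lemma le_mult_infdist:
  fixes x :: "'a::metric_space"
  assumes "B \<noteq> {}" "c > 0" "\<And>p. p \<in> B \<Longrightarrow> d \<le> c * dist x p"
  shows "d \<le> c * infdist x B"
proof -
  have "d / c \<le> infdist x B"
    unfolding infdist_eq_setdist using assms
    by (intro le_setdistI) (auto simp: divide_le_eq mult.commute)
  then show ?thesis using assms(2) by (simp add: divide_le_eq mult.commute)
qed

lemma infdist_le_mult_infdist_cover:
  fixes x :: "'a::metric_space \<times> 'b::metric_space"
  assumes "B \<noteq> {}" "B \<subseteq> fst -` F \<union> X" "c \<ge> 1"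
    and "infdist x X \<le> c * infdist (fst x) F"
  shows "infdist x X \<le> c * infdist x B"
proof (rule le_mult_infdist)
  fix p assume "p \<in> B"
  with assms(2) consider "fst p \<in> F" | "p \<in> X" by blast
  then show "infdist x X \<le> c * dist x p"
  proof cases
    case 1
    then have "infdist (fst x) F \<le> dist x p"
      using infdist_le dist_fst_le order_trans by blast
    with assms(3,4) show ?thesis
      by (smt (verit) mult_left_mono)
  next
    case 2
    then have "infdist x X \<le> dist x p" by (rule infdist_le)
    also have "\<dots> \<le> c * dist x p" using assms(3) by (simp add: mult_le_cancel_right1)
    finally show ?thesis .
  qed
qed (use assms in auto)

theorem lemma1:
  fixes U :: "((real^'m) \<times> real) set" and U' :: "(real^'m) set"
    and x0 :: "(real^'m) \<times> real" and C \<epsilon> Ct :: real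
    and k i :: nat and \<phi> :: "nat \<Rightarrow> real^'m \<Rightarrow> real"
  defines "X \<equiv> closure U - U"
  defines "U0' \<equiv> connected_component_set U' (fst x0)"
  defines "U1 \<equiv> {(y, t). y \<in> U0' \<and> \<phi> i y < t \<and> t < \<phi> (Suc i) y}"
  assumes U: "open U" "bounded U" "subanalytic U"
    and fin: "finite_proj X"
    and C: "C > 0" and eps: "\<epsilon> > 0" and x0: "x0 \<in> U"
    and reg: "ce_regular C \<epsilon> x0 X"
    and Ct: "Ct \<ge> 1"
    and h1: "infdist x0 (X - cone_at x0 \<epsilon>) \<le> Ct * infdist (fst x0) (fst ` (X - cone_at x0 \<epsilon>))"
    and h2: "Ct * infdist (fst x0) (fst ` (X - cone_at x0 \<epsilon>)) \<le> Ct * infdist (fst x0) (discr X)"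
    and U': "open U'" "subanalytic U'" "U' \<subseteq> fst ` U - discr X" "fst x0 \<in> U'"
    and h3: "infdist (fst x0) (discr X) \<le> Ct * infdist (fst x0) (closure U' - U')"
    and cyl_an: "\<forall>j<k. ranalytic_on (\<phi> j) U0' \<and> bounded (\<phi> j ` U0')"
    and cyl_ord: "\<forall>j. Suc j < k \<longrightarrow> (\<forall>y\<in>U0'. \<phi> j y < \<phi> (Suc j) y)"
    and cyl_graph: "X \<inter> fst -` U0' = (\<Union>j<k. {(y, \<phi> j y) | y. y \<in> U0'})"
    and i: "Suc i < k" and x0U1: "x0 \<in> U1"
  shows "infdist x0 X \<le> Ct\<^sup>2 * infdist x0 (closure U1 - U1)"
proof -
  have X: "X = frontier U"
    using U(1) by (simp add: X_def frontier_def interior_open)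
  have U1: "U1 = cylinder_cell U0' (\<phi> i) (\<phi> (Suc i))"
    by (simp add: U1_def cylinder_cell_def)
  have U0': "open U0'" "frontier U0' \<subseteq> frontier U'"
    unfolding U0'_def using U'(1)
    by (simp_all add: open_connected_component frontier_of_connected_component_subset)
  have "continuous_on U0' (\<phi> i)" "continuous_on U0' (\<phi> (Suc i))"
    using cyl_an i by (auto intro: ranalytic_on_imp_continuous_on)
  from frontier_cylinder_cell_subset[OF this U0'(1)]
  have "closure U1 - U1 \<subseteq> fst -` (closure U' - U') \<union> X"
    using U0'(2) U'(1) i cyl_graph unfolding U1 by (fastforce simp: frontier_def interior_open)
  moreover have "(fst x0, \<phi> i (fst x0)) \<in> closure U1 - U1"
    using x0U1 unfolding U1
    by (intro graph_point_in_frontier_cylinder_cell) (auto simp: cylinder_cell_def case_prod_beta)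
  moreover have "infdist x0 X \<le> Ct\<^sup>2 * infdist (fst x0) (closure U' - U')"
  proof -
    have "infdist x0 X \<le> infdist x0 (X - cone_at x0 \<epsilon>)"
      using frontier_minus_cone_nonempty[OF U(2) x0] by (intro infdist_mono) (auto simp: X)
    also have "\<dots> \<le> Ct * (Ct * infdist (fst x0) (closure U' - U'))"
      using h1 h2 h3 Ct by (smt (verit) mult_left_mono)
    finally show ?thesis by (simp add: power2_eq_square)
  qed
  ultimately show ?thesis
    using Ct by (intro infdist_le_mult_infdist_cover) (auto simp: one_le_power)
qed

end
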